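(* For $\gamma\ge0$ let $P_1(\gamma),P_2(\gamma),\dots$ be i.i.d. Poisson random variables with parameter $\gamma$. Let $x\in\mathbb{R}$, $\delta>0$, $\lambda\ge0$, $\epsilon>0$, and set $\lambda^-_\epsilon=\max\{0,\lambda-\epsilon\}$, $\lambda^+_\epsilon=\lambda+\epsilon$. Then for every $n\in\mathbb{N}$, $$\inf_{\gamma\in(\lambda-\epsilon,\lambda+\epsilon)\cap[0,\infty)}\mathbb{P}\Big(\tfrac1n\textstyle\sum_{i=1}^nP_i(\gamma)\in(x-\delta,x+\delta)\Big)=\inf_{\gamma\in C}\mathbb{P}\Big(\tfrac1n\textstyle\sum_{i=1}^nP_i(\gamma)\in(x-\delta,x+\delta)\Big),$$ where $C=\big((\lambda-\epsilon,\lambda+\epsilon)\cap[x-\delta,x+\delta]\cap[0,\infty)\big)\cup\{\lambda^-_\epsilon,\lambda^+_\epsilon\}$. *)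

theory Defs
  imports "HOL-Probability.Probability"
begin

text \<open>Poisson distribution with parameter gamma >= 0; for gamma = 0 it is the
  point mass at 0 (the library's poisson_pmf is only specified for rate > 0).\<close>
definition poisson :: "real \<Rightarrow> nat pmf" where
  "poisson \<gamma> = (if \<gamma> = 0 then return_pmf 0 else poisson_pmf \<gamma>)"

definition iid_poisson :: "nat \<Rightarrow> real \<Rightarrow> (nat \<Rightarrow> nat) pmf" where
  "iid_poisson n \<gamma> = Pi_pmf {1..n} 0 (\<lambda>_. poisson \<gamma>)"

definition mean_prob :: "nat \<Rightarrow> real \<Rightarrow> real \<Rightarrow> real \<Rightarrow> real" where
  "mean_prob n \<gamma> x \<delta> =
     measure_pmf.prob (iid_poisson n \<gamma>)
       {P. (\<Sum>i=1..n. real (P i)) / real n \<in> {x - \<delta> <..< x + \<delta>}}"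

end

theory Submission imports Defs begin

text \<open>The sum of \<open>n\<close> i.i.d. Poisson(\<open>\<gamma>\<close>) variables is Poisson(\<open>n\<gamma>\<close>), so the probability
  in question is \<open>f (n\<gamma>)\<close> with \<open>f \<mu> = exp (-\<mu>) * (\<Sum>k=a..<c. \<mu>^k / k!)\<close>, where \<open>a \<le> k < c\<close>
  are the integers with \<open>k/n \<in> (x - \<delta>, x + \<delta>)\<close>. In \<open>f'\<close> the sum telescopes, leaving
  \<open>f' \<mu> = exp (-\<mu>) * (\<mu>^(a-1) / (a-1)! - \<mu>^(c-1) / (c-1)!)\<close>; the ratio of the two terms is
  increasing in \<open>\<mu>\<close>, so \<open>f'\<close> changes sign at most once, from positive to negative. Hence \<open>f\<close>
  is quasiconcave, and its infimum over any subset of \<open>[max 0 (\<lambda> - \<epsilon>), \<lambda> + \<epsilon>]\<close> whose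
  closure contains both endpoints is the smaller endpoint value. Both sets in the theorem are of
  this kind.\<close>

lemma pmf_poisson_eq: "\<gamma> \<ge> 0 \<Longrightarrow> pmf (poisson \<gamma>) k = \<gamma> ^ k / fact k * exp (-\<gamma>)"
  by (cases k) (auto simp: poisson_def pmf_return indicator_def)

lemma poisson_add:
  assumes "a \<ge> 0" "b \<ge> 0"
  shows "map_pmf (\<lambda>(y, z). y + z) (pair_pmf (poisson a) (poisson b)) = poisson (a + b)"
proof (rule pmf_eqI)
  fix k :: nat
  have "(\<lambda>(y, z). y + z) -` {k} = (\<lambda>j. (j, k - j)) ` {..k}"
    by (auto simp: image_iff)
  then have "pmf (map_pmf (\<lambda>(y, z). y + z) (pair_pmf (poisson a) (poisson b))) k
      = (\<Sum>p\<in>(\<lambda>j. (j, k - j)) ` {..k}. pmf (pair_pmf (poisson a) (poisson b)) p)"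
    by (simp add: pmf_map measure_measure_pmf_finite)
  also have "\<dots> = (\<Sum>j\<le>k. pmf (poisson a) j * pmf (poisson b) (k - j))"
    by (subst sum.reindex) (auto simp: inj_on_def pmf_pair)
  also have "\<dots> = (\<Sum>j\<le>k. real (k choose j) * a ^ j * b ^ (k - j)) / fact k * exp (-(a + b))"
    unfolding sum_divide_distrib sum_distrib_right
    using assms by (intro sum.cong)
      (auto simp: pmf_poisson_eq binomial_fact exp_add[symmetric] field_simps)
  also have "\<dots> = pmf (poisson (a + b)) k"
    using assms by (simp add: pmf_poisson_eq binomial_ring[symmetric] add.commute)
  finally show "pmf (map_pmf (\<lambda>(y, z). y + z) (pair_pmf (poisson a) (poisson b))) k
      = pmf (poisson (a + b)) k" .
qed

lemma sum_Pi_pmf_poisson: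
  assumes "finite A" "\<gamma> \<ge> 0"
  shows "map_pmf (\<lambda>P. \<Sum>i\<in>A. P i) (Pi_pmf A 0 (\<lambda>_. poisson \<gamma>)) = poisson (real (card A) * \<gamma>)"
  using assms(1)
proof (induction A rule: finite_induct)
  case empty
  then show ?case by (simp add: poisson_def map_return_pmf)
next
  case (insert i A)
  let ?\<Pi> = "Pi_pmf A 0 (\<lambda>_. poisson \<gamma>)"
  have "map_pmf (\<lambda>P. \<Sum>j\<in>insert i A. P j) (Pi_pmf (insert i A) 0 (\<lambda>_. poisson \<gamma>))
      = map_pmf (\<lambda>(y, P). y + (\<Sum>j\<in>A. P j)) (pair_pmf (poisson \<gamma>) ?\<Pi>)"
  proof -
    have "(\<Sum>j\<in>A. (P(i := y)) j) = (\<Sum>j\<in>A. P j)" for P and y :: nat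
      using insert by (intro sum.cong) auto
    then show ?thesis
      using insert by (simp add: Pi_pmf_insert pmf.map_comp case_prod_beta' o_def)
  qed
  also have "\<dots> = map_pmf (\<lambda>(y, z). y + z)
                    (pair_pmf (poisson \<gamma>) (map_pmf (\<lambda>P. \<Sum>j\<in>A. P j) ?\<Pi>))"
    by (simp add: map_pair[symmetric, of id, simplified] pmf.map_comp case_prod_beta' o_def)
  also have "\<dots> = poisson (\<gamma> + real (card A) * \<gamma>)"
    using insert.IH assms by (simp add: poisson_add)
  finally show ?case
    using insert by (simp add: algebra_simps)
qed

definition poisson_window :: "nat \<Rightarrow> nat \<Rightarrow> real \<Rightarrow> real" where
  "poisson_window a c \<mu> = (\<Sum>k=a..<c. \<mu> ^ k / fact k) * exp (-\<mu>)"

lemma measure_poisson_atLeastLessThan: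
  "\<mu> \<ge> 0 \<Longrightarrow> measure_pmf.prob (poisson \<mu>) {a..<c} = poisson_window a c \<mu>"
  by (simp add: measure_measure_pmf_finite poisson_window_def sum_distrib_right pmf_poisson_eq)

lemma nat_greaterThanLessThan_real:
  fixes L U :: real
  shows "{k::nat. real k \<in> {L<..<U}} = {nat (\<lfloor>L\<rfloor> + 1)..<nat \<lceil>U\<rceil>}"
proof -
  have "real k > L \<longleftrightarrow> k \<ge> nat (\<lfloor>L\<rfloor> + 1)" for k :: nat
    by linarith
  moreover have "real k < U \<longleftrightarrow> k < nat \<lceil>U\<rceil>" for k :: nat
    by (metis nat_ceiling_le_eq not_le)
  ultimately show ?thesis by auto
qed

lemma mean_prob_eq_poisson_window:
  assumes "n \<ge> 1" "\<gamma> \<ge> 0"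
  shows "mean_prob n \<gamma> x \<delta>
       = poisson_window (nat (\<lfloor>n * (x - \<delta>)\<rfloor> + 1)) (nat \<lceil>n * (x + \<delta>)\<rceil>) (real n * \<gamma>)"
proof -
  let ?S = "\<lambda>P :: nat \<Rightarrow> nat. \<Sum>i=1..n. P i"
  have "{P. (\<Sum>i=1..n. real (P i)) / real n \<in> {x - \<delta> <..< x + \<delta>}}
      = ?S -` {k. real k \<in> {n * (x - \<delta>) <..< n * (x + \<delta>)}}"
    using assms by (auto simp: field_simps simp flip: of_nat_sum)
  then have "mean_prob n \<gamma> x \<delta> = measure_pmf.prob (map_pmf ?S (iid_poisson n \<gamma>))
                {k. real k \<in> {n * (x - \<delta>) <..< n * (x + \<delta>)}}"
    unfolding mean_prob_def by (simp add: measure_map_pmf)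
  also have "map_pmf ?S (iid_poisson n \<gamma>) = poisson (n * \<gamma>)"
    unfolding iid_poisson_def using sum_Pi_pmf_poisson[of "{1..n}" \<gamma>] assms by simp
  finally show ?thesis
    unfolding nat_greaterThanLessThan_real using assms by (simp add: measure_poisson_atLeastLessThan)
qed

definition power_fact_deriv :: "nat \<Rightarrow> real \<Rightarrow> real" where
  "power_fact_deriv k \<mu> = (if k = 0 then 0 else \<mu> ^ (k - 1) / fact (k - 1))"

lemma power_fact_has_real_derivative:
  "((\<lambda>\<mu>. \<mu> ^ k / fact k) has_real_derivative power_fact_deriv k \<mu>) (at \<mu>)"
proof (cases k)
  case 0
  then show ?thesis by (simp add: power_fact_deriv_def)
next
  case (Suc m)
  have "((\<lambda>\<mu>. \<mu> ^ Suc m / fact (Suc m)) has_real_derivative real (Suc m) * \<mu> ^ m / fact (Suc m)) (at \<mu>)"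
    by (rule DERIV_cdivide) (use DERIV_pow[of "Suc m"] in simp)
  then show ?thesis
    using Suc by (simp add: power_fact_deriv_def fact_Suc del: of_nat_Suc)
qed

lemma poisson_window_has_real_derivative:
  assumes "a \<le> c"
  shows "(poisson_window a c has_real_derivative
            (power_fact_deriv a \<mu> - power_fact_deriv c \<mu>) * exp (-\<mu>)) (at \<mu>)"
proof -
  let ?S = "\<Sum>k=a..<c. \<mu> ^ k / fact k" and ?S' = "\<Sum>k=a..<c. power_fact_deriv k \<mu>"
  have "((\<lambda>\<mu>. \<Sum>k=a..<c. \<mu> ^ k / fact k) has_real_derivative ?S') (at \<mu>)"
    by (intro DERIV_sum power_fact_has_real_derivative)
  moreover have "((\<lambda>\<mu>. exp (-\<mu>)) has_real_derivative exp (-\<mu>) * (-1)) (at \<mu>)"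
    by (auto intro!: derivative_eq_intros)
  ultimately have "(poisson_window a c has_real_derivative ?S' * exp (-\<mu>) + exp (-\<mu>) * (-1) * ?S) (at \<mu>)"
    unfolding poisson_window_def[abs_def] by (rule DERIV_mult)
  moreover have "?S' - ?S = power_fact_deriv a \<mu> - power_fact_deriv c \<mu>"
  proof -
    have "\<mu> ^ k / fact k = power_fact_deriv (Suc k) \<mu>" for k
      by (simp add: power_fact_deriv_def)
    then show ?thesis
      using sum_Suc_diff'[OF assms, of "\<lambda>k. power_fact_deriv k \<mu>"] by (simp add: sum_subtractf)
  qed
  moreover have "?S' * exp (-\<mu>) + exp (-\<mu>) * (-1) * ?S = (?S' - ?S) * exp (-\<mu>)"
    by (simp add: algebra_simps)
  ultimately show ?thesis by simp
qed

lemma continuous_on_poisson_window: "continuous_on A (poisson_window a c)"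
  unfolding poisson_window_def[abs_def] by (intro continuous_intros) auto

text \<open>The ratio of the two terms is \<open>\<mu>^(c-a) * (a-1)! / (c-1)!\<close>, which is increasing.\<close>
lemma power_fact_deriv_single_crossing:
  assumes "a < c" "0 < \<xi>\<^sub>1" "\<xi>\<^sub>1 < \<xi>\<^sub>2" "power_fact_deriv a \<xi>\<^sub>1 < power_fact_deriv c \<xi>\<^sub>1"
  shows "power_fact_deriv a \<xi>\<^sub>2 \<le> power_fact_deriv c \<xi>\<^sub>2"
proof (cases "a = 0")
  case True
  then show ?thesis using assms by (simp add: power_fact_deriv_def)
next
  case False
  define p d where "p = a - 1" and "d = c - a"
  have a: "a - 1 = p" and c: "c - 1 = p + d"
    using False assms(1) by (auto simp: p_def d_def)
  have "\<xi>\<^sub>1 ^ p / fact p < \<xi>\<^sub>1 ^ p * \<xi>\<^sub>1 ^ d / fact (p + d)"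
    using assms(4) False assms(1) unfolding power_fact_deriv_def a c by (simp add: power_add)
  then have "1 / fact p < \<xi>\<^sub>1 ^ d / fact (p + d)"
    using assms(2) by (simp add: field_simps)
  also have "\<dots> \<le> \<xi>\<^sub>2 ^ d / fact (p + d)"
    using assms by (intro divide_right_mono power_mono) auto
  finally have "\<xi>\<^sub>2 ^ p * (1 / fact p) \<le> \<xi>\<^sub>2 ^ p * (\<xi>\<^sub>2 ^ d / fact (p + d))"
    using assms by (intro mult_left_mono) auto
  then show ?thesis
    using False assms(1) unfolding power_fact_deriv_def a c by (simp add: power_add)
qed

lemma poisson_window_quasiconcave:
  assumes "0 \<le> \<mu>\<^sub>1" "\<mu>\<^sub>1 \<le> \<mu>" "\<mu> \<le> \<mu>\<^sub>2"
  shows "min (poisson_window a c \<mu>\<^sub>1) (poisson_window a c \<mu>\<^sub>2) \<le> poisson_window a c \<mu>"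
proof (cases "a < c")
  case False
  then show ?thesis by (simp add: poisson_window_def)
next
  case True
  let ?f = "poisson_window a c"
  let ?v = "\<lambda>\<xi>. power_fact_deriv a \<xi> - power_fact_deriv c \<xi>"
  have deriv: "(?f has_real_derivative ?v \<xi> * exp (-\<xi>)) (at \<xi>)" for \<xi>
    using True by (simp add: poisson_window_has_real_derivative)
  show ?thesis
  proof (rule ccontr)
    assume "\<not> ?thesis"
    then have less1: "?f \<mu> < ?f \<mu>\<^sub>1" and less2: "?f \<mu> < ?f \<mu>\<^sub>2" by auto
    then have "\<mu>\<^sub>1 < \<mu>" "\<mu> < \<mu>\<^sub>2" using assms by (auto simp: order.order_iff_strict)
    obtain \<xi>\<^sub>1 where \<xi>\<^sub>1: "\<mu>\<^sub>1 < \<xi>\<^sub>1" "\<xi>\<^sub>1 < \<mu>" "?f \<mu> - ?f \<mu>\<^sub>1 = (\<mu> - \<mu>\<^sub>1) * (?v \<xi>\<^sub>1 * exp (-\<xi>\<^sub>1))"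
      using MVT2[OF \<open>\<mu>\<^sub>1 < \<mu>\<close> deriv] by blast
    obtain \<xi>\<^sub>2 where \<xi>\<^sub>2: "\<mu> < \<xi>\<^sub>2" "\<xi>\<^sub>2 < \<mu>\<^sub>2" "?f \<mu>\<^sub>2 - ?f \<mu> = (\<mu>\<^sub>2 - \<mu>) * (?v \<xi>\<^sub>2 * exp (-\<xi>\<^sub>2))"
      using MVT2[OF \<open>\<mu> < \<mu>\<^sub>2\<close> deriv] by blast
    have "(\<mu> - \<mu>\<^sub>1) * (?v \<xi>\<^sub>1 * exp (-\<xi>\<^sub>1)) < 0"
      using \<xi>\<^sub>1(3) less1 by linarith
    then have "?v \<xi>\<^sub>1 < 0"
      using \<open>\<mu>\<^sub>1 < \<mu>\<close> by (simp add: mult_less_0_iff)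
    then have "?v \<xi>\<^sub>2 \<le> 0"
      using power_fact_deriv_single_crossing[OF True, of \<xi>\<^sub>1 \<xi>\<^sub>2] \<xi>\<^sub>1 \<xi>\<^sub>2 assms(1) by simp
    then have "(\<mu>\<^sub>2 - \<mu>) * (?v \<xi>\<^sub>2 * exp (-\<xi>\<^sub>2)) \<le> 0"
      using \<open>\<mu> < \<mu>\<^sub>2\<close> by (simp add: mult_le_0_iff)
    then show False using \<xi>\<^sub>2(3) less2 by linarith
  qed
qed

lemma INF_quasiconcave_eq_min_endpoints:
  fixes g :: "real \<Rightarrow> real"
  assumes "S \<subseteq> {lo..hi}" "lo \<in> closure S" "hi \<in> closure S"
    and "continuous_on {lo..hi} g"
    and "\<And>t. t \<in> {lo..hi} \<Longrightarrow> min (g lo) (g hi) \<le> g t"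
  shows "(INF t\<in>S. g t) = min (g lo) (g hi)"
proof (rule antisym)
  have "S \<noteq> {}" using assms(2) by auto
  then show "min (g lo) (g hi) \<le> (INF t\<in>S. g t)"
    using assms(1,5) by (intro cINF_greatest) auto
next
  have bdd: "bdd_below (g ` S)"
    using assms(1,5) by (intro bdd_belowI[of _ "min (g lo) (g hi)"]) auto
  have "g ` closure S \<subseteq> closure (g ` S)"
    using assms(4) closure_minimal[OF assms(1) closed_atLeastAtMost]
    by (rule continuous_image_closure_subset)
  also have "\<dots> \<subseteq> {(INF t\<in>S. g t)..}"
    using bdd by (intro closure_minimal) (auto intro: cINF_lower closed_atLeast)
  finally show "(INF t\<in>S. g t) \<le> min (g lo) (g hi)"
    using assms(2,3) by (auto simp: min_def)
qed

theorem proposition3: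
  fixes x \<delta> lam \<epsilon> :: real and n :: nat
  assumes "\<delta> > 0" and "lam \<ge> 0" and "\<epsilon> > 0" and "n \<ge> 1"
  shows "(INF \<gamma> \<in> {lam - \<epsilon> <..< lam + \<epsilon>} \<inter> {0..}. mean_prob n \<gamma> x \<delta>) =
         (INF \<gamma> \<in> ({lam - \<epsilon> <..< lam + \<epsilon>} \<inter> {x - \<delta> .. x + \<delta>} \<inter> {0..})
                   \<union> {max 0 (lam - \<epsilon>), lam + \<epsilon>}. mean_prob n \<gamma> x \<delta>)"
    (is "(INF \<gamma>\<in>?L. _) = (INF \<gamma>\<in>?R. _)")
proof -
  define G :: "real \<Rightarrow> real" where
    "G \<gamma> = poisson_window (nat (\<lfloor>n * (x - \<delta>)\<rfloor> + 1)) (nat \<lceil>n * (x + \<delta>)\<rceil>) (real n * \<gamma>)"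
    for \<gamma>
  define lo hi :: real where "lo = max 0 (lam - \<epsilon>)" and "hi = lam + \<epsilon>"
  have "lo < hi" using assms by (simp add: lo_def hi_def)
  have sets: "?L \<subseteq> {lo..hi}" "?R \<subseteq> {lo..hi}" "{lo<..<hi} \<subseteq> ?L" "{lo, hi} \<subseteq> ?R"
    using assms by (auto simp: lo_def hi_def)
  have cont: "continuous_on {lo..hi} G"
    unfolding G_def by (intro continuous_on_compose2[OF continuous_on_poisson_window] continuous_intros) auto
  have quasiconcave: "min (G lo) (G hi) \<le> G t" if "t \<in> {lo..hi}" for t
    unfolding G_def using that \<open>lo < hi\<close>
    by (intro poisson_window_quasiconcave) (auto simp: lo_def intro: mult_left_mono)
  have "lo \<in> closure ?L" "hi \<in> closure ?L"
    using closure_mono[OF sets(3)] \<open>lo < hi\<close> by auto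
  then have L: "(INF \<gamma>\<in>?L. G \<gamma>) = min (G lo) (G hi)"
    by (rule INF_quasiconcave_eq_min_endpoints[OF sets(1) _ _ cont quasiconcave])
  have "lo \<in> closure ?R" "hi \<in> closure ?R"
    using sets(4) by (auto intro!: subsetD[OF closure_subset])
  then have R: "(INF \<gamma>\<in>?R. G \<gamma>) = min (G lo) (G hi)"
    by (rule INF_quasiconcave_eq_min_endpoints[OF sets(2) _ _ cont quasiconcave])
  have "mean_prob n \<gamma> x \<delta> = G \<gamma>" if "\<gamma> \<in> {lo..hi}" for \<gamma>
    using that assms by (simp add: G_def lo_def mean_prob_eq_poisson_window)
  then show ?thesis
    using L R sets(1,2) by (metis (no_types, lifting) INF_cong subsetD)
qed

end
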